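(* Let $D$ be a positive integer and $G$ a connected graph of maximum degree at most $D$. Then for every set $S$ of $n$ vertices of $G$, there exist at least $\lceil (n-1)/D\rceil$ pairwise vertex-disjoint paths in $G$, each having two distinct endpoints, both of which belong to $S$. *)

theory Defs
  imports Complex_Main
begin

definition graph :: "'a set \<Rightarrow> ('a \<Rightarrow> 'a \<Rightarrow> bool) \<Rightarrow> bool" where
  "graph V E \<longleftrightarrow> finite V \<and> (\<forall>u v. E u v \<longrightarrow> u \<in> V \<and> v \<in> V) \<and>
     (\<forall>u v. E u v \<longrightarrow> E v u) \<and> (\<forall>v. \<not> E v v)"

definition degree :: "'a set \<Rightarrow> ('a \<Rightarrow> 'a \<Rightarrow> bool) \<Rightarrow> 'a \<Rightarrow> nat" where
  "degree V E v = card {w \<in> V. E v w}"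

definition walk :: "'a set \<Rightarrow> ('a \<Rightarrow> 'a \<Rightarrow> bool) \<Rightarrow> 'a list \<Rightarrow> bool" where
  "walk V E p \<longleftrightarrow> p \<noteq> [] \<and> set p \<subseteq> V \<and> (\<forall>i. Suc i < length p \<longrightarrow> E (p ! i) (p ! Suc i))"

definition path :: "'a set \<Rightarrow> ('a \<Rightarrow> 'a \<Rightarrow> bool) \<Rightarrow> 'a list \<Rightarrow> bool" where
  "path V E p \<longleftrightarrow> walk V E p \<and> distinct p"

definition connected_graph :: "'a set \<Rightarrow> ('a \<Rightarrow> 'a \<Rightarrow> bool) \<Rightarrow> bool" where
  "connected_graph V E \<longleftrightarrow> graph V E \<and> V \<noteq> {} \<and>
     (\<forall>u\<in>V. \<forall>v\<in>V. \<exists>p. walk V E p \<and> hd p = u \<and> last p = v)"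

end

theory Submission
  imports Defs
begin

(* It suffices to treat trees: deleting an edge that lies on a cycle keeps the graph connected
  and does not raise degrees. In a tree, the branch at an edge uv is the part hanging off v once
  uv is cut. If some branch contains two points of S, take a lowest one: each of its at most
  deg v - 1 sub-branches holds at most one point of S, so the branch holds at most D of them.
  Join two of them by a path inside the branch, delete the branch (what remains is again a
  connected tree) and recurse; so every path accounts for at most D points of S. If no branch
  contains two points of S, then the at most D branches at a point s of S, which cover S - {s},
  hold at most one point of S each, hence card S <= D + 1 and one path suffices. Altogether
  card S <= D k + 1 for the k paths found. *)

definition induced :: "'a set \<Rightarrow> ('a \<Rightarrow> 'a \<Rightarrow> bool) \<Rightarrow> 'a \<Rightarrow> 'a \<Rightarrow> bool" where
  "induced A E a b \<longleftrightarrow> a \<in> A \<and> b \<in> A \<and> E a b"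

definition remove_edge :: "('a \<Rightarrow> 'a \<Rightarrow> bool) \<Rightarrow> 'a \<Rightarrow> 'a \<Rightarrow> 'a \<Rightarrow> 'a \<Rightarrow> bool" where
  "remove_edge E u v a b \<longleftrightarrow> E a b \<and> {a, b} \<noteq> {u, v}"

text \<open>Acyclicity, in the form: every edge is a bridge.\<close>
definition forest :: "('a \<Rightarrow> 'a \<Rightarrow> bool) \<Rightarrow> bool" where
  "forest E \<longleftrightarrow> (\<forall>u v. E u v \<longrightarrow> \<not> (remove_edge E u v)\<^sup>*\<^sup>* u v)"

definition branch :: "'a set \<Rightarrow> ('a \<Rightarrow> 'a \<Rightarrow> bool) \<Rightarrow> 'a \<Rightarrow> 'a \<Rightarrow> 'a set" where
  "branch V E u v = {x. (induced (V - {u}) E)\<^sup>*\<^sup>* v x}"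

definition S_path :: "'a set \<Rightarrow> ('a \<Rightarrow> 'a \<Rightarrow> bool) \<Rightarrow> 'a set \<Rightarrow> 'a list \<Rightarrow> bool" where
  "S_path V E S p \<longleftrightarrow> path V E p \<and> hd p \<noteq> last p \<and> hd p \<in> S \<and> last p \<in> S"

definition disjoint_lists :: "'a list list \<Rightarrow> bool" where
  "disjoint_lists Ps \<longleftrightarrow>
     (\<forall>i<length Ps. \<forall>j<length Ps. i \<noteq> j \<longrightarrow> set (Ps ! i) \<inter> set (Ps ! j) = {})"

lemma disjoint_lists_Cons:
  "disjoint_lists (p # Ps) \<longleftrightarrow> (\<forall>q\<in>set Ps. set p \<inter> set q = {}) \<and> disjoint_lists Ps"
  unfolding disjoint_lists_def
  by (simp add: All_less_Suc2 all_set_conv_all_nth Int_commute) blast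

lemma graph_edgeD:
  assumes "graph V E" "E u v"
  shows "u \<in> V" "v \<in> V" "u \<noteq> v" "E v u"
proof -
  have "\<forall>a b. E a b \<longrightarrow> a \<in> V \<and> b \<in> V" "\<forall>a b. E a b \<longrightarrow> E b a" "\<forall>a. \<not> E a a"
    using assms(1) by (simp_all add: graph_def)
  with assms(2) show "u \<in> V" "v \<in> V" "u \<noteq> v" "E v u"
    by blast+
qed

lemma graph_symp: "graph V E \<Longrightarrow> symp E"
  by (simp add: graph_def symp_def)

lemma symp_induced: "symp E \<Longrightarrow> symp (induced A E)"
  by (auto simp: symp_def induced_def)

lemma graph_induced_eq: "graph V E \<Longrightarrow> induced V E = E"
  by (auto simp: graph_def induced_def fun_eq_iff)

lemma graph_induced: "graph V E \<Longrightarrow> A \<subseteq> V \<Longrightarrow> graph A (induced A E)"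
  by (auto simp: graph_def induced_def finite_subset)

lemma induced_le: "induced A E \<le> E"
  by (auto simp: induced_def)

lemma degree_mono:
  assumes "finite V" "V' \<subseteq> V" "E' \<le> E"
  shows "degree V' E' x \<le> degree V E x"
  unfolding degree_def using assms by (intro card_mono) auto

lemma walk_Cons:
  "walk A E (x # p) \<longleftrightarrow> x \<in> A \<and> (p = [] \<or> E x (hd p) \<and> walk A E p)"
  by (cases p) (auto simp: walk_def nth_Cons split: nat.splits)

lemma walk_mono: "walk A E p \<Longrightarrow> A \<subseteq> B \<Longrightarrow> E \<le> F \<Longrightarrow> walk B F p"
  unfolding walk_def by auto

lemma path_mono: "path A E p \<Longrightarrow> A \<subseteq> B \<Longrightarrow> E \<le> F \<Longrightarrow> path B F p"
  unfolding path_def using walk_mono by blast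

lemma walk_drop: "walk A E p \<Longrightarrow> i < length p \<Longrightarrow> walk A E (drop i p)"
  unfolding walk_def by (auto dest: in_set_dropD)

lemma walk_rtranclp: "walk A E p \<Longrightarrow> E\<^sup>*\<^sup>* (hd p) (last p)"
proof (induction p)
  case (Cons x p)
  then show ?case
    by (cases p) (auto simp: walk_Cons intro: converse_rtranclp_into_rtranclp)
qed (simp add: walk_def)

lemma rtranclp_induced_path:
  "(induced A E)\<^sup>*\<^sup>* x y \<Longrightarrow> x \<in> A \<Longrightarrow> \<exists>p. path A E p \<and> hd p = x \<and> last p = y"
proof (induction rule: converse_rtranclp_induct)
  case base
  show ?case by (intro exI[of _ "[y]"]) (simp add: path_def walk_def base)
next
  case (step x z)
  then have "z \<in> A" "E x z" by (auto simp: induced_def)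
  with step obtain p where p: "path A E p" "hd p = z" "last p = y" by blast
  show ?case
  proof (cases "x \<in> set p")
    case True
    then obtain i where "i < length p" "p ! i = x" by (auto simp: in_set_conv_nth)
    with p show ?thesis
      by (intro exI[of _ "drop i p"]) (auto simp: path_def walk_drop hd_drop_conv_nth)
  next
    case False
    have "p \<noteq> []" using p(1) by (simp add: path_def walk_def)
    with False p step.prems \<open>E x z\<close> show ?thesis
      by (intro exI[of _ "x # p"]) (auto simp: path_def walk_Cons)
  qed
qed

lemma forest_mono: "forest F \<Longrightarrow> E \<le> F \<Longrightarrow> forest E"
proof -
  assume "forest F" "E \<le> F"
  then have "remove_edge E u v \<le> remove_edge F u v" for u v
    by (auto simp: remove_edge_def)
  with \<open>forest F\<close> \<open>E \<le> F\<close> show "forest E"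
    unfolding forest_def by (metis predicate2D rtranclp_mono)
qed

lemma symp_remove_edge: "symp E \<Longrightarrow> symp (remove_edge E u v)"
  by (auto simp: symp_def remove_edge_def insert_commute)

lemma graph_remove_edge: "graph V E \<Longrightarrow> graph V (remove_edge E u v)"
  by (auto simp: graph_def remove_edge_def insert_commute)

lemma rtranclp_remove_edge_eq:
  assumes "symp E" "(remove_edge E u v)\<^sup>*\<^sup>* u v"
  shows "(remove_edge E u v)\<^sup>*\<^sup>* = E\<^sup>*\<^sup>*"
proof -
  let ?E' = "remove_edge E u v"
  have "?E'\<^sup>*\<^sup>* v u"
    using sympD[OF symp_rtranclp[OF symp_remove_edge[OF assms(1)]] assms(2)] .
  have "E \<le> ?E'\<^sup>*\<^sup>*"
  proof (intro predicate2I)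
    fix a b assume "E a b"
    show "?E'\<^sup>*\<^sup>* a b"
    proof (cases "{a, b} = {u, v}")
      case True
      with assms(2) \<open>?E'\<^sup>*\<^sup>* v u\<close> show ?thesis
        by (auto simp: doubleton_eq_iff)
    next
      case False
      with \<open>E a b\<close> show ?thesis
        by (intro r_into_rtranclp) (simp add: remove_edge_def)
    qed
  qed
  moreover have "?E' \<le> E"
    by (auto simp: remove_edge_def)
  ultimately show ?thesis
    using rtranclp_subset by metis
qed

lemma spanning_forest:
  assumes "graph V E" "\<forall>x\<in>V. \<forall>y\<in>V. E\<^sup>*\<^sup>* x y"
  shows "\<exists>T\<le>E. graph V T \<and> (\<forall>x\<in>V. \<forall>y\<in>V. T\<^sup>*\<^sup>* x y) \<and> forest T"
  using assms
proof (induction "card {(a, b). E a b}" arbitrary: E rule: less_induct)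
  case less
  show ?case
  proof (cases "forest E")
    case True
    with less.prems show ?thesis by blast
  next
    case False
    then obtain u v where uv: "E u v" "(remove_edge E u v)\<^sup>*\<^sup>* u v"
      by (auto simp: forest_def)
    let ?E' = "remove_edge E u v"
    have conn': "\<forall>x\<in>V. \<forall>y\<in>V. ?E'\<^sup>*\<^sup>* x y"
      using less.prems(2) rtranclp_remove_edge_eq[OF graph_symp[OF less.prems(1)] uv(2)] by simp
    have le: "?E' \<le> E"
      by (auto simp: remove_edge_def)
    have "{(a, b). E a b} \<subseteq> V \<times> V" "finite V"
      using less.prems(1) by (auto simp: graph_def)
    then have "finite {(a, b). E a b}"
      by (simp add: finite_subset)
    moreover have "{(a, b). ?E' a b} \<subset> {(a, b). E a b}"
      using uv(1) le by (fastforce simp: remove_edge_def)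
    ultimately have "card {(a, b). ?E' a b} < card {(a, b). E a b}"
      by (rule psubset_card_mono)
    then obtain T where "T \<le> ?E'" "graph V T" "\<forall>x\<in>V. \<forall>y\<in>V. T\<^sup>*\<^sup>* x y" "forest T"
      using less.hyps[OF _ graph_remove_edge[OF less.prems(1)] conn'] by blast
    with le show ?thesis
      by (blast intro: order_trans)
  qed
qed

lemma branch_subset: "branch V E u v \<subseteq> insert v (V - {u})"
proof
  fix x assume "x \<in> branch V E u v"
  then have "(induced (V - {u}) E)\<^sup>*\<^sup>* v x"
    by (simp add: branch_def)
  then show "x \<in> insert v (V - {u})"
    by (induction rule: rtranclp_induct) (auto simp: induced_def)
qed

lemma branch_subset_Diff:
  assumes "graph V E" "E u v"
  shows "branch V E u v \<subseteq> V - {u}"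
  using branch_subset[of V E u v] assms by (auto simp: graph_def)

lemma finite_branch: "finite V \<Longrightarrow> finite (branch V E u v)"
  using branch_subset by (rule finite_subset) simp

lemma start_in_branch: "v \<in> branch V E u v"
  by (simp add: branch_def)

lemma reachable_cover:
  assumes "v \<in> A"
  shows "{x. (induced A E)\<^sup>*\<^sup>* v x}
           \<subseteq> insert v (\<Union>w\<in>{w\<in>A. E v w}. {x. (induced (A - {v}) E)\<^sup>*\<^sup>* w x})"
proof
  fix x assume "x \<in> {x. (induced A E)\<^sup>*\<^sup>* v x}"
  then have "(induced A E)\<^sup>*\<^sup>* v x" by simp
  then show "x \<in> insert v (\<Union>w\<in>{w\<in>A. E v w}. {x. (induced (A - {v}) E)\<^sup>*\<^sup>* w x})"
  proof (induction rule: rtranclp_induct)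
    case (step y z)
    then have "y \<in> A" "z \<in> A" "E y z"
      by (auto simp: induced_def)
    consider "z = v" | "y = v" | "z \<noteq> v" "y \<noteq> v"
      by blast
    then show ?case
    proof cases
      case 3
      with step.IH obtain w where "w \<in> A" "E v w" "(induced (A - {v}) E)\<^sup>*\<^sup>* w y"
        by blast
      moreover have "induced (A - {v}) E y z"
        using 3 \<open>y \<in> A\<close> \<open>z \<in> A\<close> \<open>E y z\<close> by (simp add: induced_def)
      ultimately show ?thesis
        by (auto intro: rtranclp.rtrancl_into_rtrancl)
    qed (use \<open>z \<in> A\<close> \<open>E y z\<close> in auto)
  qed simp
qed

lemma branch_cover:
  assumes "graph V E" "E u v"
  shows "branch V E u v \<subseteq> insert v (\<Union>w\<in>{w\<in>V. E v w} - {u}. branch V E v w)"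
proof -
  have "v \<in> V - {u}"
    using assms by (auto simp: graph_def)
  moreover have "induced (V - {u} - {v}) E \<le> induced (V - {v}) E"
    by (auto simp: induced_def)
  ultimately show ?thesis
    using reachable_cover[of v "V - {u}" E] rtranclp_mono
    unfolding branch_def by fastforce
qed

lemma vertices_cover:
  assumes "graph V E" "\<forall>x\<in>V. \<forall>y\<in>V. E\<^sup>*\<^sup>* x y" "s \<in> V"
  shows "V \<subseteq> insert s (\<Union>w\<in>{w\<in>V. E s w}. branch V E s w)"
  using reachable_cover[of s V E] assms
  by (auto simp: branch_def graph_induced_eq)

lemma card_Int_cover_le:
  assumes "finite S" "finite N" "X \<subseteq> insert v (\<Union>w\<in>N. B w)"
    and "\<forall>w\<in>N. card (S \<inter> B w) \<le> 1"
  shows "card (S \<inter> X) \<le> card N + 1"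
proof -
  have "card (S \<inter> X) \<le> card (insert v (\<Union>w\<in>N. S \<inter> B w))"
    using assms(1,3) by (intro card_mono) auto
  also have "\<dots> \<le> card (\<Union>w\<in>N. S \<inter> B w) + 1"
    by (simp add: card_insert_le_m1)
  also have "\<dots> \<le> (\<Sum>w\<in>N. card (S \<inter> B w)) + 1"
    using card_UN_le[OF assms(2), of "\<lambda>w. S \<inter> B w"] by simp
  also have "\<dots> \<le> card N + 1"
    using sum_mono[of N "\<lambda>w. card (S \<inter> B w)" "\<lambda>_. 1"] assms(4) by simp
  finally show ?thesis .
qed

lemma branch_psubset:
  assumes G: "graph V E" and "forest E" "E u v" "E v w" "w \<noteq> u"
  shows "branch V E v w \<subset> branch V E u v"
proof -
  have sym: "symp E" and uv: "u \<in> V" "v \<in> V" "u \<noteq> v" and vw: "w \<in> V" "v \<noteq> w"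
    using G assms(3,4) by (auto simp: graph_def symp_def)
  have u_notin: "u \<notin> branch V E v w"
  proof
    assume "u \<in> branch V E v w"
    then have "(induced (V - {v}) E)\<^sup>*\<^sup>* w u"
      by (simp add: branch_def)
    moreover have "induced (V - {v}) E \<le> remove_edge E u v"
      by (auto simp: induced_def remove_edge_def doubleton_eq_iff)
    ultimately have "(remove_edge E u v)\<^sup>*\<^sup>* w u"
      by (metis predicate2D rtranclp_mono)
    moreover have "remove_edge E u v v w"
      using assms(4,5) vw by (auto simp: remove_edge_def doubleton_eq_iff)
    ultimately have "(remove_edge E u v)\<^sup>*\<^sup>* v u"
      by (rule converse_rtranclp_into_rtranclp[rotated])
    then have "(remove_edge E u v)\<^sup>*\<^sup>* u v"
      using sympD[OF symp_rtranclp[OF symp_remove_edge[OF sym]]] by blast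
    with \<open>forest E\<close> \<open>E u v\<close> show False
      by (simp add: forest_def)
  qed
  have "branch V E v w \<subseteq> branch V E u v"
  proof
    fix x assume "x \<in> branch V E v w"
    then have "(induced (V - {v}) E)\<^sup>*\<^sup>* w x"
      by (simp add: branch_def)
    then show "x \<in> branch V E u v"
    proof (induction rule: rtranclp_induct)
      case base
      have "induced (V - {u}) E v w"
        using uv vw assms(4,5) by (simp add: induced_def)
      then show ?case
        by (simp add: branch_def)
    next
      case (step y z)
      then have "y \<in> branch V E v w" "z \<in> branch V E v w"
        by (auto simp: branch_def)
      with u_notin step.hyps(2) have "induced (V - {u}) E y z"
        by (auto simp: induced_def)
      with step.IH show ?case
        by (auto simp: branch_def)
    qed
  qed
  moreover have "v \<notin> branch V E v w"
    using branch_subset_Diff[OF G assms(4)] by blast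
  ultimately show ?thesis
    using start_in_branch[of v V E u] by blast
qed

lemma lowest_heavy_branch:
  assumes "graph V E" "forest E" "E u v" "1 < card (S \<inter> branch V E u v)"
  shows "\<exists>u v. E u v \<and> 1 < card (S \<inter> branch V E u v) \<and>
           (\<forall>w. E v w \<longrightarrow> w \<noteq> u \<longrightarrow> card (S \<inter> branch V E v w) \<le> 1)"
  using assms(3,4)
proof (induction "card (branch V E u v)" arbitrary: u v rule: less_induct)
  case less
  show ?case
  proof (cases "\<exists>w. E v w \<and> w \<noteq> u \<and> 1 < card (S \<inter> branch V E v w)")
    case True
    then obtain w where w: "E v w" "w \<noteq> u" "1 < card (S \<inter> branch V E v w)"
      by blast
    have "finite V"
      using assms(1) by (simp add: graph_def)
    then have "card (branch V E v w) < card (branch V E u v)"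
      using branch_psubset[OF assms(1,2) less.prems(1) w(1,2)]
      by (intro psubset_card_mono finite_branch)
    from less.hyps[OF this w(1,3)] show ?thesis .
  next
    case False
    with less.prems show ?thesis
      by (auto simp: not_less)
  qed
qed

lemma card_branch_le_degree:
  assumes G: "graph V E" and "finite S" "E u v"
    and light: "\<forall>w. E v w \<longrightarrow> w \<noteq> u \<longrightarrow> card (S \<inter> branch V E v w) \<le> 1"
  shows "card (S \<inter> branch V E u v) \<le> degree V E v"
proof -
  let ?N = "{w\<in>V. E v w}"
  have "finite ?N" "u \<in> ?N"
    using G \<open>E u v\<close> by (auto simp: graph_def)
  have "card (S \<inter> branch V E u v) \<le> card (?N - {u}) + 1"
    using \<open>finite S\<close> \<open>finite ?N\<close> branch_cover[OF G \<open>E u v\<close>] light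
    by (intro card_Int_cover_le) auto
  also have "\<dots> = degree V E v"
    using \<open>finite ?N\<close> \<open>u \<in> ?N\<close> card_gt_0_iff[of ?N]
    by (auto simp: degree_def card_Diff_singleton)
  finally show ?thesis .
qed

lemma card_le_Suc_degree:
  assumes G: "graph V E" and "\<forall>x\<in>V. \<forall>y\<in>V. E\<^sup>*\<^sup>* x y" "S \<subseteq> V" "s \<in> V"
    and light: "\<forall>w. E s w \<longrightarrow> card (S \<inter> branch V E s w) \<le> 1"
  shows "card S \<le> degree V E s + 1"
proof -
  have "finite V"
    using G by (simp add: graph_def)
  then have "card (S \<inter> V) \<le> card {w\<in>V. E s w} + 1"
    using assms(3) vertices_cover[OF assms(1,2,4)] light
    by (intro card_Int_cover_le) (auto intro: finite_subset)
  with \<open>S \<subseteq> V\<close> show ?thesis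
    by (simp add: degree_def Int_absorb2)
qed

lemma connected_Diff_branch:
  assumes G: "graph V E" and conn: "\<forall>x\<in>V. \<forall>y\<in>V. E\<^sup>*\<^sup>* x y" and "E u v"
  defines "V' \<equiv> V - branch V E u v"
  shows "\<forall>x\<in>V'. \<forall>y\<in>V'. (induced V' E)\<^sup>*\<^sup>* x y"
proof -
  have Ein: "\<And>a b. E a b \<Longrightarrow> a \<in> V \<and> b \<in> V"
    using G by (simp add: graph_def)
  have u: "u \<in> V" "u \<notin> branch V E u v"
    using Ein[OF \<open>E u v\<close>] branch_subset_Diff[OF G \<open>E u v\<close>] by auto
  have from_u: "(induced V' E)\<^sup>*\<^sup>* u x" if "E\<^sup>*\<^sup>* u x" "x \<notin> branch V E u v" for x
    using that
  proof (induction rule: rtranclp_induct)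
    case (step y z)
    show ?case
    proof (cases "y \<in> branch V E u v")
      case True
      text \<open>An edge leaving the branch can only lead back to \<open>u\<close>.\<close>
      have "z = u"
      proof (rule ccontr)
        assume "z \<noteq> u"
        with True u(2) step.hyps(2) Ein[OF step.hyps(2)] have "induced (V - {u}) E y z"
          by (auto simp: induced_def)
        with True have "z \<in> branch V E u v"
          by (auto simp: branch_def)
        with step.prems show False ..
      qed
      then show ?thesis
        by simp
    next
      case False
      with step Ein[OF step.hyps(2)] show ?thesis
        by (auto simp: V'_def induced_def intro: rtranclp.rtrancl_into_rtrancl)
    qed
  qed simp
  have "symp (induced V' E)"
    using graph_symp[OF G] by (rule symp_induced)
  with from_u conn u(1) show ?thesis
    unfolding V'_def by (metis DiffE rtranclp_trans sympD symp_rtranclp)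
qed

lemma rtranclp_induced_reachable_set:
  "(induced A E)\<^sup>*\<^sup>* a x \<Longrightarrow> (induced {y. (induced A E)\<^sup>*\<^sup>* a y} E)\<^sup>*\<^sup>* a x"
proof (induction rule: rtranclp_induct)
  case (step y z)
  have "(induced A E)\<^sup>*\<^sup>* a z"
    using step.hyps by (rule rtranclp.rtrancl_into_rtrancl)
  moreover have "E y z"
    using step.hyps(2) by (simp add: induced_def)
  ultimately have "induced {y. (induced A E)\<^sup>*\<^sup>* a y} E y z"
    using step.hyps(1) unfolding induced_def[of "{y. (induced A E)\<^sup>*\<^sup>* a y}"] by simp
  with step.IH show ?case
    by simp
qed simp

lemma branch_path:
  assumes "graph V E" "s \<in> branch V E u v" "t \<in> branch V E u v"
  shows "\<exists>p. path (branch V E u v) E p \<and> hd p = s \<and> last p = t"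
proof -
  let ?R = "induced (branch V E u v) E"
  have "?R\<^sup>*\<^sup>* v x" if "x \<in> branch V E u v" for x
    using that rtranclp_induced_reachable_set by (fastforce simp: branch_def)
  moreover have "symp ?R"
    using graph_symp[OF assms(1)] by (rule symp_induced)
  ultimately have "?R\<^sup>*\<^sup>* s t"
    using assms(2,3) by (metis rtranclp_trans sympD symp_rtranclp)
  then show ?thesis
    using assms(2) by (rule rtranclp_induced_path)
qed

lemma subgraph_Diff_branch:
  assumes G: "graph V E" and conn: "\<forall>x\<in>V. \<forall>y\<in>V. E\<^sup>*\<^sup>* x y" and "forest E"
    and deg: "\<forall>x\<in>V. degree V E x \<le> D" and "E u v"
  defines "V' \<equiv> V - branch V E u v"
  shows "card V' < card V" "graph V' (induced V' E)" "\<forall>x\<in>V'. \<forall>y\<in>V'. (induced V' E)\<^sup>*\<^sup>* x y"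
    "forest (induced V' E)" "\<forall>x\<in>V'. degree V' (induced V' E) x \<le> D"
proof -
  have "finite V"
    using G by (simp add: graph_def)
  moreover have "v \<in> V"
    using G \<open>E u v\<close> by (rule graph_edgeD)
  ultimately show "card V' < card V"
    unfolding V'_def using start_in_branch[of v V E u] by (intro psubset_card_mono) auto
  show "graph V' (induced V' E)"
    using G by (rule graph_induced) (simp add: V'_def)
  show "\<forall>x\<in>V'. \<forall>y\<in>V'. (induced V' E)\<^sup>*\<^sup>* x y"
    unfolding V'_def by (rule connected_Diff_branch[OF G conn \<open>E u v\<close>])
  show "forest (induced V' E)"
    using \<open>forest E\<close> induced_le by (rule forest_mono)
  have "degree V' (induced V' E) x \<le> degree V E x" for x
    using \<open>finite V\<close> by (rule degree_mono) (auto simp: V'_def induced_le)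
  with deg show "\<forall>x\<in>V'. degree V' (induced V' E) x \<le> D"
    by (auto simp: V'_def intro: order_trans)
qed

lemma two_elements_if_card_gt_1:
  assumes "finite X" "1 < card X"
  obtains s t where "s \<in> X" "t \<in> X" "s \<noteq> t"
proof -
  have "\<not> (\<forall>a\<in>X. \<forall>b\<in>X. a = b)"
    using assms card_le_Suc0_iff_eq[OF assms(1)] by simp
  then show thesis
    using that by blast
qed

lemma S_path_mono: "S_path A F T p \<Longrightarrow> A \<subseteq> B \<Longrightarrow> F \<le> E \<Longrightarrow> T \<subseteq> S \<Longrightarrow> S_path B E S p"
  unfolding S_path_def using path_mono by blast

lemma S_path_in_branch:
  assumes "graph V E" "finite S" "1 < card (S \<inter> branch V E u v)"
  shows "\<exists>p. S_path (branch V E u v) E S p"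
proof -
  have "finite (S \<inter> branch V E u v)"
    using assms(2) by simp
  then obtain s t where st: "s \<in> S \<inter> branch V E u v" "t \<in> S \<inter> branch V E u v" "s \<noteq> t"
    using assms(3) by (rule two_elements_if_card_gt_1)
  moreover obtain p where "path (branch V E u v) E p" "hd p = s" "last p = t"
    using branch_path[OF assms(1) IntD2[OF st(1)] IntD2[OF st(2)]] by blast
  ultimately show ?thesis
    by (auto simp: S_path_def)
qed

lemma S_path_if_two_elements:
  assumes "graph V E" "\<forall>x\<in>V. \<forall>y\<in>V. E\<^sup>*\<^sup>* x y" "S \<subseteq> V" "s \<in> S" "t \<in> S" "s \<noteq> t"
  shows "\<exists>p. S_path V E S p"
proof -
  have "(induced V E)\<^sup>*\<^sup>* s t"
    using assms(2-5) by (auto simp: graph_induced_eq[OF assms(1)])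
  moreover have "s \<in> V"
    using assms(3,4) by blast
  ultimately obtain p where "path V E p" "hd p = s" "last p = t"
    by (blast dest: rtranclp_induced_path)
  with assms(4-6) show ?thesis
    unfolding S_path_def by blast
qed

lemma S_paths_if_light_branches:
  assumes G: "graph V E" and conn: "\<forall>x\<in>V. \<forall>y\<in>V. E\<^sup>*\<^sup>* x y"
    and deg: "\<forall>v\<in>V. degree V E v \<le> D" and SV: "S \<subseteq> V"
    and light: "\<forall>u v. E u v \<longrightarrow> card (S \<inter> branch V E u v) \<le> 1"
  shows "\<exists>Ps. (\<forall>p\<in>set Ps. S_path V E S p) \<and> disjoint_lists Ps \<and> card S \<le> D * length Ps + 1"
proof (cases "card S \<le> 1")
  case True
  then show ?thesis
    by (intro exI[of _ "[]"]) (simp add: disjoint_lists_def)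
next
  case False
  have "finite S"
    using G SV by (auto simp: graph_def intro: finite_subset)
  moreover have "1 < card S"
    using False by simp
  ultimately obtain s t where st: "s \<in> S" "t \<in> S" "s \<noteq> t"
    by (rule two_elements_if_card_gt_1)
  then obtain p where "S_path V E S p"
    using S_path_if_two_elements[OF G conn SV] by blast
  have "card S \<le> degree V E s + 1"
    using light st SV by (intro card_le_Suc_degree[OF G conn SV]) auto
  also have "\<dots> \<le> D * length [p] + 1"
    using deg st SV by auto
  finally show ?thesis
    using \<open>S_path V E S p\<close> by (intro exI[of _ "[p]"]) (simp add: disjoint_lists_def)
qed

lemma forest_disjoint_S_paths:
  assumes "graph V E" "\<forall>x\<in>V. \<forall>y\<in>V. E\<^sup>*\<^sup>* x y" "forest E" "\<forall>v\<in>V. degree V E v \<le> D" "S \<subseteq> V"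
  shows "\<exists>Ps. (\<forall>p\<in>set Ps. S_path V E S p) \<and> disjoint_lists Ps \<and> card S \<le> D * length Ps + 1"
  using assms
proof (induction "card V" arbitrary: V E S rule: less_induct)
  case less
  note G = less.prems(1) and forest = less.prems(3) and deg = less.prems(4) and SV = less.prems(5)
  have "finite S"
    using G SV by (auto simp: graph_def intro: finite_subset)
  show ?case
  proof (cases "\<exists>u v. E u v \<and> 1 < card (S \<inter> branch V E u v)")
    case True
    then obtain u v where uv: "E u v" "1 < card (S \<inter> branch V E u v)"
      and light: "\<forall>w. E v w \<longrightarrow> w \<noteq> u \<longrightarrow> card (S \<inter> branch V E v w) \<le> 1"
      using lowest_heavy_branch[OF G forest] by blast
    define C where "C = branch V E u v"
    define V' where "V' = V - C"
    have "card (S \<inter> C) \<le> D"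
      using card_branch_le_degree[OF G \<open>finite S\<close> uv(1) light] deg graph_edgeD(2)[OF G uv(1)]
      by (fastforce simp: C_def)
    obtain p where p: "S_path C E S p"
      using S_path_in_branch[OF G \<open>finite S\<close> uv(2)] by (auto simp: C_def)
    have "S - C \<subseteq> V'"
      using SV by (auto simp: V'_def)
    then obtain Ps where Ps: "\<forall>q\<in>set Ps. S_path V' (induced V' E) (S - C) q"
      "disjoint_lists Ps" "card (S - C) \<le> D * length Ps + 1"
      using less.hyps[OF subgraph_Diff_branch[OF less.prems(1-4) uv(1), folded C_def V'_def]]
      by blast
    have "C \<subseteq> V"
      using branch_subset_Diff[OF G uv(1)] by (auto simp: C_def)
    with p have "S_path V E S p"
      by (rule S_path_mono) simp_all
    moreover have "S_path V E S q" if "q \<in> set Ps" for q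
      using Ps(1) that S_path_mono[OF _ _ induced_le] by (fastforce simp: V'_def)
    moreover have "disjoint_lists (p # Ps)"
      using Ps(1,2) p by (auto simp: disjoint_lists_Cons S_path_def path_def walk_def V'_def)
    moreover have "card S = card (S \<inter> C) + card (S - C)"
      using \<open>finite S\<close> by (rule card_Int_Diff)
    ultimately show ?thesis
      using \<open>card (S \<inter> C) \<le> D\<close> Ps(3) by (intro exI[of _ "p # Ps"]) simp
  next
    case False
    with less.prems show ?thesis
      by (intro S_paths_if_light_branches) (auto simp: not_less)
  qed
qed

theorem lemma6p3:
  fixes V :: "'a set" and E :: "'a \<Rightarrow> 'a \<Rightarrow> bool" and D :: nat and S :: "'a set"
  assumes "D \<ge> 1"
    and "connected_graph V E"
    and "\<forall>v\<in>V. degree V E v \<le> D"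
    and "S \<subseteq> V"
  shows "\<exists>Ps :: 'a list list.
           (\<forall>p\<in>set Ps. path V E p \<and> hd p \<noteq> last p \<and> hd p \<in> S \<and> last p \<in> S) \<and>
           (\<forall>i<length Ps. \<forall>j<length Ps. i \<noteq> j \<longrightarrow> set (Ps ! i) \<inter> set (Ps ! j) = {}) \<and>
           int (length Ps) \<ge> \<lceil>(real (card S) - 1) / real D\<rceil>"
proof -
  have G: "graph V E"
    using assms(2) by (simp add: connected_graph_def)
  have walks: "\<forall>x\<in>V. \<forall>y\<in>V. \<exists>p. walk V E p \<and> hd p = x \<and> last p = y"
    using assms(2) by (simp add: connected_graph_def)
  have "E\<^sup>*\<^sup>* x y" if "x \<in> V" "y \<in> V" for x y
    using walks that walk_rtranclp by metis
  then obtain T where T: "T \<le> E" "graph V T" "\<forall>x\<in>V. \<forall>y\<in>V. T\<^sup>*\<^sup>* x y" "forest T"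
    using spanning_forest[OF G] by blast
  have "degree V T v \<le> degree V E v" for v
    using G T(1) by (intro degree_mono) (auto simp: graph_def)
  with assms(3) have "\<forall>v\<in>V. degree V T v \<le> D"
    by (auto intro: order_trans)
  then obtain Ps where Ps: "\<forall>p\<in>set Ps. S_path V T S p" "disjoint_lists Ps"
    "card S \<le> D * length Ps + 1"
    using forest_disjoint_S_paths[OF T(2-4) _ assms(4)] by blast
  have "S_path V E S p" if "p \<in> set Ps" for p
    using Ps(1) that S_path_mono[OF _ order_refl T(1) order_refl] by blast
  moreover have "(real (card S) - 1) / real D \<le> real (length Ps)"
    using Ps(3) assms(1) by (simp add: divide_le_eq mult.commute flip: of_nat_mult of_nat_add)
  ultimately show ?thesis
    using Ps(2) by (auto simp: S_path_def disjoint_lists_def ceiling_le_iff)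
qed

end
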